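(* Let $\mathrm{M}$ be the 2-space group $\ast632$ (IT number 17, $p6m$), so that $E^2/\mathrm{M}$ is a $30^\circ$–$60^\circ$ right triangle. Then $\mathrm{Sym}(\mathrm{M})=\mathrm{Aff}(\mathrm{M})=\{\mathrm{idt.}\}$, and $\Omega:\mathrm{Aff}(\mathrm{M})\to\mathrm{Out}(\mathrm{M})$ is an isomorphism.
   Context: A 2-space group is a discrete group of isometries of $E^2$ with compact quotient. Affine maps of $E^2$ are written $a+A$ ($x\mapsto a+Ax$). For a 2-space group $\mathrm{M}$, let $N_A(\mathrm{M})$ be its normalizer in the affine group of $E^2$; each $a+A\in N_A(\mathrm{M})$ induces an affinity $(a+A)_\star:\mathrm{M}x\mapsto\mathrm{M}(a+Ax)$ of the flat orbifold $E^2/\mathrm{M}$. $\mathrm{Aff}(\mathrm{M})$ is the group of all such affinities and $\mathrm{Sym}(\mathrm{M})=\mathrm{Isom}(E^2/\mathrm{M})$ its subgroup of isometries; idt. is the identity. $\Omega:\mathrm{Aff}(\mathrm{M})\to\mathrm{Out}(\mathrm{M})$ sends $(a+A)_\star$ to the outer automorphism class of $g\mapsto(a+A)g(a+A)^{-1}$ on $\mathrm{M}$. *)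

theory Defs
  imports Complex_Main "HOL-Algebra.Coset"
begin

text \<open>The Euclidean plane E^2 is modelled by the type complex (as a 2-dimensional
real inner product space). Affine maps x -> a + A x with A an invertible real-linear map.\<close>

definition affine_maps :: "(complex \<Rightarrow> complex) set" where
  "affine_maps = {f. \<exists>a L. linear L \<and> bij L \<and> f = (\<lambda>x. a + L x)}"

definition omega6 :: complex where
  "omega6 = cis (pi / 3)"

definition hex_lattice :: "complex set" where
  "hex_lattice = {of_int m + of_int n * omega6 | m n. True}"

definition p6m :: "(complex \<Rightarrow> complex) set" where
  "p6m = {(\<lambda>z. t + omega6 ^ k * z) | t k. t \<in> hex_lattice \<and> k < 6}
       \<union> {(\<lambda>z. t + omega6 ^ k * cnj z) | t k. t \<in> hex_lattice \<and> k < 6}"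

definition orb :: "(complex \<Rightarrow> complex) set \<Rightarrow> complex \<Rightarrow> complex set" where
  "orb \<Gamma> x = (\<lambda>g. g x) ` \<Gamma>"

definition orbit_space :: "(complex \<Rightarrow> complex) set \<Rightarrow> complex set set" where
  "orbit_space \<Gamma> = range (orb \<Gamma>)"

definition normalizer_aff :: "(complex \<Rightarrow> complex) set \<Rightarrow> (complex \<Rightarrow> complex) set" where
  "normalizer_aff \<Gamma> = {f \<in> affine_maps. (\<lambda>g. f \<circ> g \<circ> inv_into UNIV f) ` \<Gamma> = \<Gamma>}"

definition induced :: "(complex \<Rightarrow> complex) set \<Rightarrow> (complex \<Rightarrow> complex) \<Rightarrow> complex set \<Rightarrow> complex set" where
  "induced \<Gamma> f = (\<lambda>S\<in>orbit_space \<Gamma>. orb \<Gamma> (f (SOME x. x \<in> S)))"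

definition Aff :: "(complex \<Rightarrow> complex) set \<Rightarrow> (complex set \<Rightarrow> complex set) set" where
  "Aff \<Gamma> = induced \<Gamma> ` normalizer_aff \<Gamma>"

definition Sym :: "(complex \<Rightarrow> complex) set \<Rightarrow> (complex set \<Rightarrow> complex set) set" where
  "Sym \<Gamma> = induced \<Gamma> ` {f \<in> normalizer_aff \<Gamma>. \<forall>x y. dist (f x) (f y) = dist x y}"

definition idt :: "(complex \<Rightarrow> complex) set \<Rightarrow> complex set \<Rightarrow> complex set" where
  "idt \<Gamma> = (\<lambda>S\<in>orbit_space \<Gamma>. S)"

definition Aff_group :: "(complex \<Rightarrow> complex) set \<Rightarrow> (complex set \<Rightarrow> complex set) monoid" where
  "Aff_group \<Gamma> = \<lparr>carrier = Aff \<Gamma>,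
     mult = (\<lambda>\<phi> \<psi>. \<lambda>S\<in>orbit_space \<Gamma>. \<phi> (\<psi> S)), one = idt \<Gamma>\<rparr>"

text \<open>Aut(M), Inn(M), Out(M) = Aut(M)/Inn(M); automorphisms are represented
as extensional maps on M.\<close>

definition Aut_group :: "(complex \<Rightarrow> complex) set \<Rightarrow> ((complex \<Rightarrow> complex) \<Rightarrow> (complex \<Rightarrow> complex)) monoid" where
  "Aut_group \<Gamma> = \<lparr>carrier = {\<phi>. \<phi> \<in> extensional \<Gamma> \<and> bij_betw \<phi> \<Gamma> \<Gamma> \<and>
        (\<forall>g\<in>\<Gamma>. \<forall>h\<in>\<Gamma>. \<phi> (g \<circ> h) = \<phi> g \<circ> \<phi> h)},
     mult = (\<lambda>\<phi> \<psi>. \<lambda>g\<in>\<Gamma>. \<phi> (\<psi> g)), one = (\<lambda>g\<in>\<Gamma>. g)\<rparr>"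

definition conj_by :: "(complex \<Rightarrow> complex) \<Rightarrow> (complex \<Rightarrow> complex) set \<Rightarrow> (complex \<Rightarrow> complex) \<Rightarrow> (complex \<Rightarrow> complex)" where
  "conj_by f \<Gamma> = (\<lambda>g\<in>\<Gamma>. f \<circ> g \<circ> inv_into UNIV f)"

definition Inn :: "(complex \<Rightarrow> complex) set \<Rightarrow> ((complex \<Rightarrow> complex) \<Rightarrow> (complex \<Rightarrow> complex)) set" where
  "Inn \<Gamma> = (\<lambda>h. conj_by h \<Gamma>) ` \<Gamma>"

definition Out_group :: "(complex \<Rightarrow> complex) set \<Rightarrow> ((complex \<Rightarrow> complex) \<Rightarrow> (complex \<Rightarrow> complex)) set monoid" where
  "Out_group \<Gamma> = Aut_group \<Gamma> Mod Inn \<Gamma>"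

definition Omega :: "(complex \<Rightarrow> complex) set \<Rightarrow> (complex set \<Rightarrow> complex set) \<Rightarrow> ((complex \<Rightarrow> complex) \<Rightarrow> (complex \<Rightarrow> complex)) set" where
  "Omega \<Gamma> \<psi> = Inn \<Gamma> #>\<^bsub>Aut_group \<Gamma>\<^esub>
      conj_by (SOME f. f \<in> normalizer_aff \<Gamma> \<and> induced \<Gamma> f = \<psi>) \<Gamma>"

end

theory Submission
  imports Defs
begin

text \<open>
  The group p6m consists of the motions z \<mapsto> t + a z and z \<mapsto> t + a cnj z with t in the
  Eisenstein lattice \<Lambda> = \<int>[\<omega>] and a one of its six units. Its translations are exactly the
  elements that commute with all their conjugates, so an automorphism \<phi> maps translations to
  translations and induces an additive bijection A of \<Lambda>. Compatibility with the rotation by \<omega>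
  forces A to be multiplication by a unit, possibly after complex conjugation, which is
  conjugation by an element of p6m fixing 0. Once this is undone, \<phi> fixes every translation;
  this determines the images of the rotation and of the reflection up to conjugation by one
  common translation, and as these generate p6m, \<phi> is inner. So Out(p6m) is trivial.

  An affine map normalizing p6m therefore induces the same automorphism as some K in p6m, and
  K\<inverse> composed with it is an affine map commuting with all of p6m. Commuting with the
  translations by 1 and \<omega> and with the rotation about 0 makes it the identity, so the affine
  normalizer is p6m itself. Hence every affinity of the orbifold is the identity, and \<Omega> is
  a map between trivial groups.
\<close>

section \<open>The Eisenstein lattice\<close>

lemma omega6_eq: "omega6 = Complex (1/2) (sqrt 3 / 2)"
  unfolding omega6_def cis.ctr by (simp add: cos_60 sin_60)

lemma Re_omega6 [simp]: "Re omega6 = 1/2" and Im_omega6 [simp]: "Im omega6 = sqrt 3 / 2"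
  by (simp_all add: omega6_eq)

lemma omega6_squared: "omega6\<^sup>2 = omega6 - 1"
  by (simp add: complex_eq_iff power2_eq_square)

lemma cnj_omega6: "cnj omega6 = 1 - omega6"
  by (simp add: complex_eq_iff)

lemma cnj_omega6_mult: "cnj omega6 * omega6 = 1"
  by (simp add: complex_eq_iff)

lemma norm_omega6 [simp]: "cmod omega6 = 1"
  by (simp add: cmod_def power2_eq_square)

lemma cnj_omega6_neq: "cnj omega6 \<noteq> omega6"
  by (simp add: complex_eq_iff)

lemma omega6_neq_0: "omega6 \<noteq> 0"
  by (simp add: complex_eq_iff)

lemma omega6_neq_1: "omega6 \<noteq> 1"
  by (simp add: complex_eq_iff)

lemma hex_lattice_iff: "x \<in> hex_lattice \<longleftrightarrow> (\<exists>m n. x = of_int m + of_int n * omega6)"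
  unfolding hex_lattice_def by auto

lemma hex_lattice_add [intro]: "x \<in> hex_lattice \<Longrightarrow> y \<in> hex_lattice \<Longrightarrow> x + y \<in> hex_lattice"
proof -
  assume "x \<in> hex_lattice" "y \<in> hex_lattice"
  then obtain m n m' n' where "x = of_int m + of_int n * omega6" "y = of_int m' + of_int n' * omega6"
    by (auto simp: hex_lattice_iff)
  then have "x + y = of_int (m + m') + of_int (n + n') * omega6"
    by (simp add: algebra_simps)
  then show ?thesis
    unfolding hex_lattice_iff by blast
qed

lemma hex_lattice_uminus [intro]: "x \<in> hex_lattice \<Longrightarrow> - x \<in> hex_lattice"
proof -
  assume "x \<in> hex_lattice"
  then obtain m n where "x = of_int m + of_int n * omega6"
    by (auto simp: hex_lattice_iff)
  then have "- x = of_int (- m) + of_int (- n) * omega6"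
    by (simp add: algebra_simps)
  then show ?thesis
    unfolding hex_lattice_iff by blast
qed

lemma hex_lattice_mult [intro]: "x \<in> hex_lattice \<Longrightarrow> y \<in> hex_lattice \<Longrightarrow> x * y \<in> hex_lattice"
proof -
  assume "x \<in> hex_lattice" "y \<in> hex_lattice"
  then obtain m n m' n' where "x = of_int m + of_int n * omega6" "y = of_int m' + of_int n' * omega6"
    by (auto simp: hex_lattice_iff)
  then have "x * y = of_int (m*m') + of_int (m*n' + n*m') * omega6 + of_int (n*n') * omega6\<^sup>2"
    by (simp add: algebra_simps power2_eq_square)
  also have "\<dots> = of_int (m*m' - n*n') + of_int (m*n' + n*m' + n*n') * omega6"
    unfolding omega6_squared by (simp add: algebra_simps)
  finally show ?thesis
    unfolding hex_lattice_iff by blast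
qed

lemma hex_lattice_cnj [intro]: "x \<in> hex_lattice \<Longrightarrow> cnj x \<in> hex_lattice"
proof -
  assume "x \<in> hex_lattice"
  then obtain m n where "x = of_int m + of_int n * omega6"
    by (auto simp: hex_lattice_iff)
  then have "cnj x = of_int (m + n) + of_int (- n) * omega6"
    by (simp add: cnj_omega6 algebra_simps)
  then show ?thesis
    unfolding hex_lattice_iff by blast
qed

lemma of_int_in_hex_lattice [simp, intro]: "of_int k \<in> hex_lattice"
  unfolding hex_lattice_iff by (rule exI[of _ k], rule exI[of _ 0]) simp

lemma zero_in_hex_lattice [simp, intro]: "0 \<in> hex_lattice"
  using of_int_in_hex_lattice[of 0] by simp

lemma one_in_hex_lattice [simp, intro]: "1 \<in> hex_lattice"
  using of_int_in_hex_lattice[of 1] by simp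

lemma omega6_in_hex_lattice [simp, intro]: "omega6 \<in> hex_lattice"
  unfolding hex_lattice_iff by (rule exI[of _ 0], rule exI[of _ 1]) simp

lemma omega6_power_in_hex_lattice [simp, intro]: "omega6 ^ k \<in> hex_lattice"
  by (induction k) auto

lemma norm_hex_lattice_point:
  "(cmod (of_int m + of_int n * omega6))\<^sup>2 = of_int (m\<^sup>2 + m*n + n\<^sup>2)"
proof -
  have "(cmod (of_int m + of_int n * omega6))\<^sup>2 = (m + n/2)\<^sup>2 + (n * sqrt 3 / 2)\<^sup>2"
    by (simp add: cmod_power2)
  also have "\<dots> = m\<^sup>2 + m*n + n\<^sup>2"
    by (simp add: power2_eq_square algebra_simps)
  finally show ?thesis
    by simp
qed

lemma hex_norm_form_eq: "4 * (m\<^sup>2 + m*n + n\<^sup>2) = (2*m + n)\<^sup>2 + 3 * n\<^sup>2" for m n :: int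
  by (simp add: power2_eq_square algebra_simps)

lemma hex_lattice_norm_sq_nat: "x \<in> hex_lattice \<Longrightarrow> \<exists>k::nat. (cmod x)\<^sup>2 = of_nat k"
proof -
  assume "x \<in> hex_lattice"
  then obtain m n where x: "x = of_int m + of_int n * omega6"
    by (auto simp: hex_lattice_iff)
  have "m\<^sup>2 + m*n + n\<^sup>2 \<ge> 0"
    using hex_norm_form_eq[of m n] by (smt (verit) zero_le_power2)
  then show ?thesis
    using norm_hex_lattice_point[of m n] x by (metis of_int_of_nat_eq nonneg_int_cases)
qed

lemma norm_hex_lattice_invertible:
  assumes "x \<in> hex_lattice" "y \<in> hex_lattice" "x * y = 1"
  shows "cmod x = 1"
proof -
  obtain k l :: nat where "(cmod x)\<^sup>2 = k" "(cmod y)\<^sup>2 = l"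
    using hex_lattice_norm_sq_nat assms(1,2) by metis
  moreover have "(cmod x)\<^sup>2 * (cmod y)\<^sup>2 = 1"
    using assms(3) by (metis norm_mult norm_one power_mult_distrib one_power2)
  ultimately have "k * l = 1"
    by (metis of_nat_1 of_nat_eq_iff of_nat_mult)
  then have "(cmod x)\<^sup>2 = 1"
    using \<open>(cmod x)\<^sup>2 = k\<close> by simp
  then show ?thesis
    using norm_ge_zero[of x] by (auto simp: power2_eq_1_iff)
qed

lemma omega6_powers: "omega6 ^ 3 = -1" "omega6 ^ 4 = - omega6" "omega6 ^ 5 = 1 - omega6"
  using omega6_squared by algebra+

lemma hex_norm_form_eq_1:
  fixes m n :: int
  assumes norm1: "m\<^sup>2 + m*n + n\<^sup>2 = 1"
  shows "(m, n) \<in> {(1, 0), (0, 1), (-1, 1), (-1, 0), (0, -1), (1, -1)}"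
proof -
  have "(2*m + n)\<^sup>2 + 3 * n\<^sup>2 = 4"
    using hex_norm_form_eq[of m n] norm1 by simp
  then have "n\<^sup>2 \<le> 1"
    by (smt (verit) zero_le_power2)
  then have "\<bar>n\<bar> \<le> 1"
    using abs_le_square_iff[of n 1] by simp
  then consider "n = 0" | "n = 1" | "n = -1"
    by linarith
  then show ?thesis
  proof cases
    case 1
    then have "m = 1 \<or> m = -1"
      using norm1 by (simp add: power2_eq_1_iff)
    with 1 show ?thesis
      by auto
  next
    case 2
    then have "m * (m + 1) = 0"
      using norm1 by (simp add: power2_eq_square algebra_simps)
    with 2 show ?thesis
      by auto
  next
    case 3
    then have "m * (m - 1) = 0"
      using norm1 by (simp add: power2_eq_square algebra_simps)
    with 3 show ?thesis
      by auto
  qed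
qed

lemma hex_lattice_unit_eq_power:
  assumes "x \<in> hex_lattice" "cmod x = 1"
  shows "\<exists>k<6. x = omega6 ^ k"
proof -
  obtain m n where x: "x = of_int m + of_int n * omega6"
    using assms(1) by (auto simp: hex_lattice_iff)
  have "m\<^sup>2 + m*n + n\<^sup>2 = 1"
    using norm_hex_lattice_point[of m n] assms(2) x by (metis of_int_eq_1_iff one_power2)
  then have "x \<in> {1, omega6, omega6 - 1, -1, - omega6, 1 - omega6}"
    using hex_norm_form_eq_1[of m n] x by auto
  then have "\<exists>k::nat \<in> {0, 1, 2, 3, 4, 5}. x = omega6 ^ k"
    using omega6_squared omega6_powers by auto
  then obtain k :: nat where "k \<in> {0, 1, 2, 3, 4, 5}" "x = omega6 ^ k"
    by blast
  then show ?thesis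
    by (intro exI[of _ k]) auto
qed

section \<open>p6m as a group of motions\<close>

definition cnj_if :: "bool \<Rightarrow> complex \<Rightarrow> complex" where
  "cnj_if e z = (if e then cnj z else z)"

definition motion :: "complex \<Rightarrow> complex \<Rightarrow> bool \<Rightarrow> complex \<Rightarrow> complex" where
  "motion t a e z = t + a * cnj_if e z"

definition hex_units :: "complex set" where
  "hex_units = {a \<in> hex_lattice. cmod a = 1}"

definition transl :: "complex \<Rightarrow> complex \<Rightarrow> complex" where
  "transl t z = t + z"

definition rot6 :: "complex \<Rightarrow> complex" where
  "rot6 z = omega6 * z"

lemma cnj_if_simps [simp]:
  "cnj_if e (x + y) = cnj_if e x + cnj_if e y" "cnj_if e (x * y) = cnj_if e x * cnj_if e y"
  "cnj_if e (x - y) = cnj_if e x - cnj_if e y" "cnj_if e (- x) = - cnj_if e x"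
  "cnj_if e 0 = 0" "cnj_if e 1 = 1" "cnj_if False x = x" "cnj_if True x = cnj x"
  "cnj_if e (cnj_if e' x) = cnj_if (e \<noteq> e') x" "cmod (cnj_if e x) = cmod x"
  by (auto simp: cnj_if_def)

lemma cnj_if_in_hex_lattice [intro]: "x \<in> hex_lattice \<Longrightarrow> cnj_if e x \<in> hex_lattice"
  by (auto simp: cnj_if_def)

lemma hex_unitsI [intro]: "a \<in> hex_lattice \<Longrightarrow> cmod a = 1 \<Longrightarrow> a \<in> hex_units"
  by (simp add: hex_units_def)

lemma hex_unitsD: "a \<in> hex_units \<Longrightarrow> a \<in> hex_lattice" "a \<in> hex_units \<Longrightarrow> cmod a = 1"
  by (simp_all add: hex_units_def)

lemma hex_units_mult [intro]: "a \<in> hex_units \<Longrightarrow> b \<in> hex_units \<Longrightarrow> a * b \<in> hex_units"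
  by (auto simp: hex_units_def norm_mult)

lemma hex_units_cnj_if [intro]: "a \<in> hex_units \<Longrightarrow> cnj_if e a \<in> hex_units"
  by (auto simp: hex_units_def)

lemma one_in_hex_units [simp, intro]: "1 \<in> hex_units"
  by (simp add: hex_units_def)

lemma omega6_power_in_hex_units [simp, intro]: "omega6 ^ k \<in> hex_units"
  by (simp add: hex_units_def norm_power)

lemma hex_units_mult_cnj: "a \<in> hex_units \<Longrightarrow> a * cnj a = 1"
  using complex_norm_square[of a] by (simp add: hex_units_def)

lemma motion_comp:
  "motion t a e \<circ> motion t' a' e' = motion (t + a * cnj_if e t') (a * cnj_if e a') (e \<noteq> e')"
  by (auto simp: motion_def fun_eq_iff algebra_simps)

lemma motion_comp_transl: "motion s a e \<circ> transl t = transl (a * cnj_if e t) \<circ> motion s a e"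
  by (simp add: motion_def transl_def fun_eq_iff algebra_simps)

lemma id_eq_motion: "id = motion 0 1 False"
  by (simp add: motion_def fun_eq_iff)

lemma transl_eq_motion: "transl t = motion t 1 False"
  by (simp add: motion_def transl_def fun_eq_iff)

lemma rot6_eq_motion: "rot6 = motion 0 omega6 False"
  by (simp add: motion_def rot6_def fun_eq_iff)

lemma cnj_eq_motion: "cnj = motion 0 1 True"
  by (simp add: motion_def fun_eq_iff)

lemma transl_comp [simp]: "transl t \<circ> transl s = transl (t + s)"
  by (simp add: transl_def fun_eq_iff)

lemma transl_0 [simp]: "transl 0 = id"
  by (simp add: transl_def fun_eq_iff)

lemma bij_transl: "bij (transl t)"
  by (rule o_bij[of "transl (- t)"]) simp_all

lemma transl_eq_iff [simp]: "transl t = transl s \<longleftrightarrow> t = s"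
  by (metis transl_def add.right_neutral)

lemma p6m_eq_motions: "p6m = {motion t a e | t a e. t \<in> hex_lattice \<and> a \<in> hex_units}"
proof -
  have "motion t a e \<in> p6m" if t: "t \<in> hex_lattice" and a: "a \<in> hex_units" for t a e
  proof -
    obtain k where "k < 6" "a = omega6 ^ k"
      using hex_lattice_unit_eq_power a by (auto simp: hex_units_def)
    then show ?thesis
      using t unfolding p6m_def motion_def cnj_if_def by (cases e) auto
  qed
  moreover have "p6m \<subseteq> {motion t a e | t a e. t \<in> hex_lattice \<and> a \<in> hex_units}"
    unfolding p6m_def motion_def cnj_if_def by (fastforce intro: exI[of _ True] exI[of _ False])
  ultimately show ?thesis
    by blast
qed

lemma p6mI [intro]: "t \<in> hex_lattice \<Longrightarrow> a \<in> hex_units \<Longrightarrow> motion t a e \<in> p6m"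
  unfolding p6m_eq_motions by blast

lemma p6mE [elim]:
  assumes "g \<in> p6m"
  obtains t a e where "g = motion t a e" "t \<in> hex_lattice" "a \<in> hex_units"
  using assms unfolding p6m_eq_motions by blast

lemma id_in_p6m [simp, intro]: "id \<in> p6m"
  unfolding id_eq_motion by blast

lemma transl_in_p6m [simp, intro]: "t \<in> hex_lattice \<Longrightarrow> transl t \<in> p6m"
  unfolding transl_eq_motion by blast

lemma rot6_in_p6m [simp, intro]: "rot6 \<in> p6m"
  unfolding rot6_eq_motion using omega6_power_in_hex_units[of 1] by auto

lemma cnj_in_p6m [simp, intro]: "cnj \<in> p6m"
  unfolding cnj_eq_motion by blast

lemma p6m_comp [intro]: "g \<in> p6m \<Longrightarrow> h \<in> p6m \<Longrightarrow> g \<circ> h \<in> p6m"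
  by (elim p6mE) (auto simp: motion_comp dest: hex_unitsD)

lemma p6m_has_left_inverse: "g \<in> p6m \<Longrightarrow> \<exists>g'\<in>p6m. g' \<circ> g = id"
proof (elim p6mE)
  fix t a e
  assume g: "g = motion t a e" and t: "t \<in> hex_lattice" and a: "a \<in> hex_units"
  define b where "b = cnj_if e (cnj a)"
  have "b \<in> hex_units" "b * cnj_if e a = 1"
    using hex_units_mult_cnj[OF a] a unfolding b_def hex_units_def
    by (cases e; auto simp: mult.commute)+
  then have "motion (- (b * cnj_if e t)) b e \<in> p6m \<and> motion (- (b * cnj_if e t)) b e \<circ> g = id"
    using t unfolding g motion_comp id_eq_motion by (auto dest: hex_unitsD)
  then show ?thesis
    by blast
qed

definition transformation_group :: "('a \<Rightarrow> 'a) set \<Rightarrow> ('a \<Rightarrow> 'a) monoid" where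
  "transformation_group \<Gamma> = \<lparr>carrier = \<Gamma>, mult = (\<circ>), one = id\<rparr>"

lemma transformation_group_simps [simp]:
  "carrier (transformation_group \<Gamma>) = \<Gamma>"
  "mult (transformation_group \<Gamma>) = (\<circ>)"
  "one (transformation_group \<Gamma>) = id"
  by (simp_all add: transformation_group_def)

lemma transformation_group_inv:
  assumes "group (transformation_group \<Gamma>)" "g \<in> \<Gamma>"
  shows "bij g" "inv_into UNIV g \<in> \<Gamma>"
    "inv\<^bsub>transformation_group \<Gamma>\<^esub> g = inv_into UNIV g"
proof -
  interpret group "transformation_group \<Gamma>"
    by (fact assms(1))
  have "g \<circ> inv\<^bsub>transformation_group \<Gamma>\<^esub> g = id" "inv\<^bsub>transformation_group \<Gamma>\<^esub> g \<circ> g = id"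
    using r_inv[of g] l_inv[of g] assms(2) by simp_all
  then show "bij g" "inv\<^bsub>transformation_group \<Gamma>\<^esub> g = inv_into UNIV g"
    by (simp_all add: o_bij inv_unique_comp)
  then show "inv_into UNIV g \<in> \<Gamma>"
    using inv_closed[of g] assms(2) by simp
qed

lemma group_p6m: "group (transformation_group p6m)"
  by (rule groupI) (auto simp: comp_assoc p6m_has_left_inverse)

lemma p6m_bij: "g \<in> p6m \<Longrightarrow> bij g"
  using transformation_group_inv[OF group_p6m] by blast

lemma inv_in_p6m [intro]: "g \<in> p6m \<Longrightarrow> inv_into UNIV g \<in> p6m"
  using transformation_group_inv[OF group_p6m] by blast

section \<open>Translations are the elements commuting with their conjugates\<close>

definition commutes_with_conjugates :: "('a, 'b) monoid_scheme \<Rightarrow> 'a \<Rightarrow> bool" where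
  "commutes_with_conjugates G g \<longleftrightarrow>
     (\<forall>h\<in>carrier G. g \<otimes>\<^bsub>G\<^esub> (h \<otimes>\<^bsub>G\<^esub> g \<otimes>\<^bsub>G\<^esub> inv\<^bsub>G\<^esub> h)
                   = (h \<otimes>\<^bsub>G\<^esub> g \<otimes>\<^bsub>G\<^esub> inv\<^bsub>G\<^esub> h) \<otimes>\<^bsub>G\<^esub> g)"

lemma iso_image_commutes_with_conjugates:
  assumes "group G" "group H" "\<phi> \<in> iso G H"
  shows "\<phi> ` {g \<in> carrier G. commutes_with_conjugates G g}
       = {h \<in> carrier H. commutes_with_conjugates H h}"
proof -
  interpret group_hom G H \<phi>
    using assms by (simp add: group_hom_def group_hom_axioms_def iso_imp_homomorphism)
  have surj: "\<phi> ` carrier G = carrier H" and inj: "inj_on \<phi> (carrier G)"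
    using assms(3) by (auto simp: iso_def bij_betw_def)
  have preserved: "commutes_with_conjugates H (\<phi> g) \<longleftrightarrow> commutes_with_conjugates G g"
    if g: "g \<in> carrier G" for g
  proof -
    have "\<phi> g \<otimes>\<^bsub>H\<^esub> (\<phi> h \<otimes>\<^bsub>H\<^esub> \<phi> g \<otimes>\<^bsub>H\<^esub> inv\<^bsub>H\<^esub> \<phi> h)
            = (\<phi> h \<otimes>\<^bsub>H\<^esub> \<phi> g \<otimes>\<^bsub>H\<^esub> inv\<^bsub>H\<^esub> \<phi> h) \<otimes>\<^bsub>H\<^esub> \<phi> g
          \<longleftrightarrow> g \<otimes>\<^bsub>G\<^esub> (h \<otimes>\<^bsub>G\<^esub> g \<otimes>\<^bsub>G\<^esub> inv\<^bsub>G\<^esub> h)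
                = (h \<otimes>\<^bsub>G\<^esub> g \<otimes>\<^bsub>G\<^esub> inv\<^bsub>G\<^esub> h) \<otimes>\<^bsub>G\<^esub> g"
      if "h \<in> carrier G" for h
      using g that by (simp add: inj_on_eq_iff[OF inj] flip: hom_mult hom_inv)
    then show ?thesis
      unfolding commutes_with_conjugates_def surj[symmetric] by simp
  qed
  have "h \<in> \<phi> ` {g \<in> carrier G. commutes_with_conjugates G g}"
    if "h \<in> carrier H" "commutes_with_conjugates H h" for h
  proof -
    obtain g where "g \<in> carrier G" "h = \<phi> g"
      using surj \<open>h \<in> carrier H\<close> by blast
    with preserved that show ?thesis
      by blast
  qed
  with preserved show ?thesis
    by auto
qed

lemma inv_transl: "inv_into UNIV (transl t) = transl (- t)"
  by (rule inv_unique_comp) simp_all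

lemma commutes_with_conjugates_p6m_iff:
  "commutes_with_conjugates (transformation_group p6m) g \<longleftrightarrow>
     (\<forall>h\<in>p6m. g \<circ> (h \<circ> g \<circ> inv_into UNIV h) = (h \<circ> g \<circ> inv_into UNIV h) \<circ> g)"
  unfolding commutes_with_conjugates_def by (simp add: transformation_group_inv(3)[OF group_p6m])

lemma p6m_conj_transl:
  assumes "h \<in> p6m"
  shows "\<exists>u. h \<circ> transl t \<circ> inv_into UNIV h = transl u"
proof -
  from \<open>h \<in> p6m\<close> obtain s a e where h: "h = motion s a e"
    by blast
  have "h \<circ> transl t \<circ> inv_into UNIV h = transl (a * cnj_if e t) \<circ> (h \<circ> inv_into UNIV h)"
    unfolding h motion_comp_transl by (simp add: comp_assoc)
  also have "\<dots> = transl (a * cnj_if e t)"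
    using bij_is_surj[OF p6m_bij[OF \<open>h \<in> p6m\<close>]] by (simp add: surj_iff)
  finally show ?thesis
    by blast
qed

lemma transl_commutes_with_conjugates:
  "commutes_with_conjugates (transformation_group p6m) (transl t)"
  unfolding commutes_with_conjugates_p6m_iff using p6m_conj_transl
  by (metis transl_comp add.commute)

lemma p6m_commutes_with_conjugates_imp_transl:
  assumes g: "g \<in> p6m" and commutes: "commutes_with_conjugates (transformation_group p6m) g"
  shows "\<exists>t\<in>hex_lattice. g = transl t"
proof -
  from g obtain t a e where g_eq: "g = motion t a e" and "t \<in> hex_lattice" "a \<in> hex_units"
    by blast
  have "g \<circ> (transl s \<circ> g \<circ> transl (- s)) = (transl s \<circ> g \<circ> transl (- s)) \<circ> g"
    if "s \<in> hex_lattice" for s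
    using commutes transl_in_p6m[OF that] unfolding commutes_with_conjugates_p6m_iff
    by (metis inv_transl)
  then have eq: "a * cnj_if e (s + t - a * cnj_if e s) = s + a * cnj_if e (t - s)"
    if "s \<in> hex_lattice" for s
    using that unfolding g_eq by (simp add: fun_eq_iff motion_def transl_def algebra_simps)
  have "a = 1 \<and> e = False"
  proof (cases e)
    case False
    then have "(a - 1)\<^sup>2 = 0"
      using eq[of 1] by (simp add: power2_eq_square algebra_simps)
    then show ?thesis
      using False by simp
  next
    case True
    then have "a = 1"
      using eq[of 1] hex_units_mult_cnj[OF \<open>a \<in> hex_units\<close>] by (simp add: algebra_simps)
    then have "cnj omega6 = omega6"
      using eq[of omega6] True by (simp add: algebra_simps)
    then show ?thesis
      using cnj_omega6_neq by simp
  qed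
  then show ?thesis
    using g_eq \<open>t \<in> hex_lattice\<close> transl_eq_motion by auto
qed

lemma commutes_with_conjugates_p6m_eq_translations:
  "{g \<in> p6m. commutes_with_conjugates (transformation_group p6m) g} = transl ` hex_lattice"
  using transl_commutes_with_conjugates p6m_commutes_with_conjugates_imp_transl by auto

section \<open>Automorphisms of p6m are inner\<close>

lemma additive_on_hex_lattice_of_int:
  assumes add: "\<And>x y. x \<in> hex_lattice \<Longrightarrow> y \<in> hex_lattice \<Longrightarrow> A (x + y) = A x + A y"
    and t: "t \<in> hex_lattice"
  shows "A (of_int k * t) = of_int k * A t"
proof (induction k rule: int_induct[where k = 0])
  case base
  show ?case
    using add[of 0 0] by simp
next
  case (step1 i)
  have "A (of_int (i + 1) * t) = A (of_int i * t + t)"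
    by (simp add: algebra_simps)
  also have "\<dots> = A (of_int i * t) + A t"
    using add t by (simp add: hex_lattice_mult)
  finally show ?case
    using step1 by (simp add: algebra_simps)
next
  case (step2 i)
  have "A (of_int i * t) = A (of_int (i - 1) * t + t)"
    by (simp add: algebra_simps)
  also have "\<dots> = A (of_int (i - 1) * t) + A t"
    using add t by (simp add: hex_lattice_mult del: of_int_diff)
  finally show ?case
    using step2 by (simp add: algebra_simps)
qed

text \<open>The relation A(\<omega> * \<omega>) = A(\<omega> - 1) pins the rotation part b down to \<omega> or its
  conjugate, and rules out the orientation-reversing case altogether.\<close>
lemma hex_lattice_additive_rotation_cases:
  assumes add: "\<And>x y. x \<in> hex_lattice \<Longrightarrow> y \<in> hex_lattice \<Longrightarrow> A (x + y) = A x + A y"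
    and rot: "\<And>t. t \<in> hex_lattice \<Longrightarrow> A (omega6 * t) = b * cnj_if e (A t)"
    and b: "cmod b = 1" and nonzero: "A 1 \<noteq> 0"
  shows "\<not> e" "b = omega6 \<or> b = cnj omega6"
proof -
  define \<alpha> where "\<alpha> = A 1"
  have A_omega: "A omega6 = b * cnj_if e \<alpha>"
    using rot[of 1] by (simp add: \<alpha>_def)
  have "A (omega6 + (- 1)) = A omega6 - \<alpha>"
    using add[of omega6 "- 1"] additive_on_hex_lattice_of_int[OF add, of 1 "- 1"]
    by (simp add: hex_lattice_uminus \<alpha>_def)
  moreover have "omega6 + (- 1) = omega6 * omega6"
    using omega6_squared by (simp add: power2_eq_square)
  ultimately have A_omega_sq: "A omega6 - \<alpha> = b * cnj_if e (A omega6)"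
    using rot[of omega6] by simp
  show "\<not> e"
  proof
    assume e
    then have "A omega6 = 2 * \<alpha>"
      using A_omega A_omega_sq complex_norm_square[of b] b by (simp add: algebra_simps)
    then have "cmod (b * cnj \<alpha>) = cmod (2 * \<alpha>)"
      using A_omega \<open>e\<close> by simp
    then have "cmod \<alpha> = 2 * cmod \<alpha>"
      using b by (simp add: norm_mult)
    then show False
      using nonzero by (simp add: \<alpha>_def)
  qed
  then have "\<alpha> * ((b - omega6) * (b - cnj omega6)) = 0"
    using A_omega A_omega_sq cnj_omega6 omega6_squared by simp algebra
  then show "b = omega6 \<or> b = cnj omega6"
    using nonzero by (simp add: \<alpha>_def)
qed

lemma hex_lattice_additive_semilinear:
  assumes add: "\<And>x y. x \<in> hex_lattice \<Longrightarrow> y \<in> hex_lattice \<Longrightarrow> A (x + y) = A x + A y"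
    and rot: "\<And>t. t \<in> hex_lattice \<Longrightarrow> A (omega6 * t) = b * cnj_if e (A t)"
    and b: "cmod b = 1" and nonzero: "A 1 \<noteq> 0"
  shows "\<exists>e'. \<forall>t\<in>hex_lattice. A t = A 1 * cnj_if e' t"
proof -
  note cases = hex_lattice_additive_rotation_cases[OF add rot b nonzero]
  have A_point: "A (of_int m + of_int n * omega6) = A 1 * (of_int m + of_int n * b)" for m n
    using add[of "of_int m" "of_int n * omega6"] rot[of 1] cases(1)
      additive_on_hex_lattice_of_int[OF add, of 1 m] additive_on_hex_lattice_of_int[OF add, of omega6 n]
    by (simp add: hex_lattice_mult algebra_simps)
  show ?thesis
  proof (cases "b = omega6")
    case True
    then show ?thesis
      by (intro exI[of _ False]) (auto simp: hex_lattice_iff A_point)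
  next
    case False
    then show ?thesis
      using cases(2) by (intro exI[of _ True]) (auto simp: hex_lattice_iff A_point)
  qed
qed

lemma p6m_hom_eqI:
  assumes hom_\<phi>: "\<And>g h. g \<in> p6m \<Longrightarrow> h \<in> p6m \<Longrightarrow> \<phi> (g \<circ> h) = \<phi> g \<circ> \<phi> h"
    and hom_\<psi>: "\<And>g h. g \<in> p6m \<Longrightarrow> h \<in> p6m \<Longrightarrow> \<psi> (g \<circ> h) = \<psi> g \<circ> \<psi> h"
    and transl: "\<And>t. t \<in> hex_lattice \<Longrightarrow> \<phi> (transl t) = \<psi> (transl t)"
    and rot6: "\<phi> rot6 = \<psi> rot6" and cnj: "\<phi> cnj = \<psi> cnj"
    and g: "g \<in> p6m"
  shows "\<phi> g = \<psi> g"
proof -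
  have rotations: "\<phi> (motion t (omega6 ^ k) False) = \<psi> (motion t (omega6 ^ k) False)"
    if t: "t \<in> hex_lattice" for t k
  proof (induction k)
    case 0
    then show ?case
      using transl t by (simp add: transl_eq_motion)
  next
    case (Suc k)
    have "motion t (omega6 ^ Suc k) False = motion t (omega6 ^ k) False \<circ> rot6"
      by (simp add: rot6_eq_motion motion_comp mult.commute)
    moreover have "motion t (omega6 ^ k) False \<in> p6m"
      using t by blast
    ultimately show ?case
      using Suc hom_\<phi> hom_\<psi> rot6 by (metis rot6_in_p6m)
  qed
  from g obtain t a e where g_eq: "g = motion t a e" and t: "t \<in> hex_lattice" and "a \<in> hex_units"
    by blast
  then obtain k where a: "a = omega6 ^ k"
    using hex_lattice_unit_eq_power by (auto simp: hex_units_def)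
  show ?thesis
  proof (cases e)
    case True
    have "g = motion t a False \<circ> cnj"
      unfolding g_eq cnj_eq_motion motion_comp using True by simp
    moreover have "motion t a False \<in> p6m"
      using t a by blast
    ultimately show ?thesis
      using hom_\<phi> hom_\<psi> rotations[OF t] cnj a by (metis cnj_in_p6m)
  next
    case False
    then show ?thesis
      using rotations t g_eq a by simp
  qed
qed

locale p6m_endomorphism_fixing_translations =
  fixes \<psi> :: "(complex \<Rightarrow> complex) \<Rightarrow> complex \<Rightarrow> complex"
  assumes closed: "\<And>g. g \<in> p6m \<Longrightarrow> \<psi> g \<in> p6m"
    and hom: "\<And>g h. g \<in> p6m \<Longrightarrow> h \<in> p6m \<Longrightarrow> \<psi> (g \<circ> h) = \<psi> g \<circ> \<psi> h"
    and fixes_transl: "\<And>t. t \<in> hex_lattice \<Longrightarrow> \<psi> (transl t) = transl t"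
begin

lemma id_image: "\<psi> id = id"
  using fixes_transl[of 0] by simp

lemma motion_same_linear_part:
  assumes "s \<in> hex_lattice" "a \<in> hex_units"
  shows "\<exists>p\<in>hex_lattice. \<psi> (motion s a e) = motion p a e"
proof -
  obtain p b f where \<psi>_eq: "\<psi> (motion s a e) = motion p b f" and "p \<in> hex_lattice" "b \<in> hex_units"
    using closed[of "motion s a e"] assms by blast
  have "b * cnj_if f t = a * cnj_if e t" if t: "t \<in> hex_lattice" for t
  proof -
    have "a * cnj_if e t \<in> hex_lattice"
      using t \<open>a \<in> hex_units\<close> by (auto dest: hex_unitsD)
    have g: "motion s a e \<in> p6m"
      using assms by blast
    have "\<psi> (motion s a e) \<circ> transl t = \<psi> (motion s a e \<circ> transl t)"
      using hom g t by (simp add: fixes_transl)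
    also have "\<dots> = \<psi> (transl (a * cnj_if e t) \<circ> motion s a e)"
      by (simp only: motion_comp_transl)
    also have "\<dots> = transl (a * cnj_if e t) \<circ> \<psi> (motion s a e)"
      using hom g \<open>a * cnj_if e t \<in> hex_lattice\<close> by (simp add: fixes_transl)
    finally have "\<psi> (motion s a e) \<circ> transl t = transl (a * cnj_if e t) \<circ> \<psi> (motion s a e)" .
    then have "(transl (b * cnj_if f t) \<circ> \<psi> (motion s a e)) 0
        = (transl (a * cnj_if e t) \<circ> \<psi> (motion s a e)) 0"
      unfolding \<psi>_eq motion_comp_transl by simp
    then show ?thesis
      by (simp add: transl_def)
  qed
  from this[of 1] this[of omega6] have "b = a" "a * cnj_if f omega6 = a * cnj_if e omega6"
    by simp_all
  moreover have "a \<noteq> 0"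
    using \<open>a \<in> hex_units\<close> by (auto simp: hex_units_def)
  ultimately have "b = a" "f = e"
    using cnj_omega6_neq by (auto simp: cnj_if_def split: if_splits)
  then show ?thesis
    using \<psi>_eq \<open>p \<in> hex_lattice\<close> by blast
qed

lemma rot6_image: "\<exists>p\<in>hex_lattice. \<psi> rot6 = motion p omega6 False"
  using motion_same_linear_part[of 0 omega6 False] omega6_power_in_hex_units[of 1]
  unfolding rot6_eq_motion by auto

lemma cnj_image: "\<exists>q. \<psi> cnj = motion q 1 True \<and> cnj q = - q"
proof -
  obtain q where \<psi>_cnj: "\<psi> cnj = motion q 1 True"
    using motion_same_linear_part[of 0 1 True] unfolding cnj_eq_motion by auto
  have "cnj \<circ> cnj = id"
    by (simp add: fun_eq_iff)
  then have "(\<psi> cnj \<circ> \<psi> cnj) 0 = 0"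
    using hom[of cnj cnj] id_image by simp
  then have "q + cnj q = 0"
    unfolding \<psi>_cnj by (simp add: motion_def)
  then have "cnj q = - q"
    by (simp add: eq_neg_iff_add_eq_0 add.commute)
  with \<psi>_cnj show ?thesis
    by blast
qed

text \<open>The translation part of the image of rot6 determines v; the relation
  cnj \<circ> rot6 \<circ> cnj \<circ> rot6 = id then pins down the image of cnj.\<close>
lemma generators_conj_by_translation:
  "\<exists>v\<in>hex_lattice. \<psi> rot6 = transl v \<circ> rot6 \<circ> transl (- v) \<and> \<psi> cnj = transl v \<circ> cnj \<circ> transl (- v)"
proof -
  obtain p where p: "p \<in> hex_lattice" and \<psi>_rot6: "\<psi> rot6 = motion p omega6 False"
    using rot6_image by blast
  obtain q where \<psi>_cnj: "\<psi> cnj = motion q 1 True" and cnj_q: "cnj q = - q"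
    using cnj_image by blast
  have "cnj \<circ> rot6 \<circ> cnj \<circ> rot6 = id"
    by (simp add: fun_eq_iff rot6_def mult.assoc[symmetric] cnj_omega6_mult)
  then have "\<psi> cnj \<circ> \<psi> rot6 \<circ> \<psi> cnj \<circ> \<psi> rot6 = id"
    using hom id_image by (metis p6m_comp cnj_in_p6m rot6_in_p6m)
  then have "(\<psi> cnj \<circ> \<psi> rot6 \<circ> \<psi> cnj \<circ> \<psi> rot6) 0 = 0"
    by simp
  then have rel: "q + cnj (p + omega6 * (q + cnj p)) = 0"
    unfolding \<psi>_cnj \<psi>_rot6 by (simp add: motion_def)
  define v where "v = omega6 * p"
  have p_eq: "p = v - omega6 * v"
    unfolding v_def using omega6_squared by algebra
  have "q + cnj p + (1 - omega6) * (- q + p) = 0"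
    using rel cnj_q cnj_omega6 by (simp add: algebra_simps)
  moreover have "cnj v = (1 - omega6) * cnj p"
    using cnj_omega6 by (simp add: v_def)
  ultimately have "omega6 * q = omega6 * (v - cnj v)"
    using omega6_squared unfolding v_def by algebra
  then have q_eq: "q = v - cnj v"
    by (simp add: omega6_neq_0)
  have "\<psi> rot6 = transl v \<circ> rot6 \<circ> transl (- v)"
    unfolding \<psi>_rot6 p_eq by (simp add: fun_eq_iff transl_def rot6_def motion_def algebra_simps)
  moreover have "\<psi> cnj = transl v \<circ> cnj \<circ> transl (- v)"
    unfolding \<psi>_cnj q_eq by (simp add: fun_eq_iff transl_def motion_def)
  ultimately show ?thesis
    using p v_def by blast
qed

lemma conj_by_translation: "\<exists>v\<in>hex_lattice. \<forall>g\<in>p6m. \<psi> g = transl v \<circ> g \<circ> transl (- v)"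
proof -
  obtain v where "v \<in> hex_lattice"
    and generators: "\<psi> rot6 = transl v \<circ> rot6 \<circ> transl (- v)" "\<psi> cnj = transl v \<circ> cnj \<circ> transl (- v)"
    using generators_conj_by_translation by blast
  have "\<psi> g = transl v \<circ> g \<circ> transl (- v)" if "g \<in> p6m" for g
  proof (rule p6m_hom_eqI[OF hom _ _ generators that])
    show "transl v \<circ> (g \<circ> h) \<circ> transl (- v)
        = (transl v \<circ> g \<circ> transl (- v)) \<circ> (transl v \<circ> h \<circ> transl (- v))" for g h
      by (simp add: fun_eq_iff transl_def)
    show "\<psi> (transl t) = transl v \<circ> transl t \<circ> transl (- v)" if "t \<in> hex_lattice" for t
      using that by (simp add: fixes_transl add.commute)
  qed
  then show ?thesis
    using \<open>v \<in> hex_lattice\<close> by blast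
qed

end

lemma in_Aut_group_iff:
  "\<phi> \<in> carrier (Aut_group \<Gamma>) \<longleftrightarrow>
     \<phi> \<in> extensional \<Gamma> \<and> bij_betw \<phi> \<Gamma> \<Gamma> \<and> (\<forall>g\<in>\<Gamma>. \<forall>h\<in>\<Gamma>. \<phi> (g \<circ> h) = \<phi> g \<circ> \<phi> h)"
  by (simp only: Aut_group_def partial_object.select_convs mem_Collect_eq)

lemma Aut_group_iso:
  "\<phi> \<in> carrier (Aut_group \<Gamma>) \<Longrightarrow> \<phi> \<in> iso (transformation_group \<Gamma>) (transformation_group \<Gamma>)"
  unfolding in_Aut_group_iff by (auto simp: iso_def hom_def bij_betw_def)

lemma conj_by_in_Aut_group:
  assumes closed: "\<And>g h. g \<in> \<Gamma> \<Longrightarrow> h \<in> \<Gamma> \<Longrightarrow> g \<circ> h \<in> \<Gamma>"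
    and f: "bij f" and image: "(\<lambda>g. f \<circ> g \<circ> inv_into UNIV f) ` \<Gamma> = \<Gamma>"
  shows "conj_by f \<Gamma> \<in> carrier (Aut_group \<Gamma>)"
proof -
  have f_inv: "inv_into UNIV f (f x) = x" for x
    using f by (simp add: bij_is_inj)
  have "inj (\<lambda>g. f \<circ> g \<circ> inv_into UNIV f)"
  proof (rule injI)
    fix g h
    assume "f \<circ> g \<circ> inv_into UNIV f = f \<circ> h \<circ> inv_into UNIV f"
    then have "inv_into UNIV f \<circ> (f \<circ> g \<circ> inv_into UNIV f) \<circ> f
             = inv_into UNIV f \<circ> (f \<circ> h \<circ> inv_into UNIV f) \<circ> f"
      by simp
    then show "g = h"
      by (simp add: fun_eq_iff f_inv)
  qed
  then have "bij_betw (conj_by f \<Gamma>) \<Gamma> \<Gamma>"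
    unfolding conj_by_def using image
    by (simp add: bij_betw_def inj_on_subset[of _ UNIV] cong: bij_betw_cong)
  moreover have "conj_by f \<Gamma> (g \<circ> h) = conj_by f \<Gamma> g \<circ> conj_by f \<Gamma> h"
    if "g \<in> \<Gamma>" "h \<in> \<Gamma>" for g h
    using that closed f_inv by (simp add: conj_by_def fun_eq_iff)
  ultimately show ?thesis
    by (simp add: in_Aut_group_iff conj_by_def)
qed

lemma inner_conj_by_in_Aut_group:
  assumes G: "group (transformation_group \<Gamma>)" and K: "K \<in> \<Gamma>"
  shows "conj_by K \<Gamma> \<in> carrier (Aut_group \<Gamma>)"
proof (rule conj_by_in_Aut_group)
  interpret group "transformation_group \<Gamma>"
    by (fact G)
  show "g \<circ> h \<in> \<Gamma>" if "g \<in> \<Gamma>" "h \<in> \<Gamma>" for g h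
    using that m_closed by simp
  note K_inv = transformation_group_inv[OF G K]
  show "bij K"
    by (fact K_inv(1))
  have "K \<circ> g \<circ> inv_into UNIV K \<in> \<Gamma>" if "g \<in> \<Gamma>" for g
    using that K K_inv m_closed by simp
  moreover have "g \<in> (\<lambda>g. K \<circ> g \<circ> inv_into UNIV K) ` \<Gamma>" if "g \<in> \<Gamma>" for g
  proof
    show "g = K \<circ> (inv_into UNIV K \<circ> g \<circ> K) \<circ> inv_into UNIV K"
      using bij_is_surj[OF K_inv(1)] by (simp add: fun_eq_iff surj_f_inv_f)
    show "inv_into UNIV K \<circ> g \<circ> K \<in> \<Gamma>"
      using that K K_inv m_closed by simp
  qed
  ultimately show "(\<lambda>g. K \<circ> g \<circ> inv_into UNIV K) ` \<Gamma> = \<Gamma>"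
    by blast
qed

lemma conj_by_mult:
  assumes G: "group (transformation_group \<Gamma>)" and "K \<in> \<Gamma>" "L \<in> \<Gamma>"
  shows "conj_by K \<Gamma> \<otimes>\<^bsub>Aut_group \<Gamma>\<^esub> conj_by L \<Gamma> = conj_by (K \<circ> L) \<Gamma>"
proof -
  interpret group "transformation_group \<Gamma>"
    by (fact G)
  have "inv_into UNIV (K \<circ> L) = inv_into UNIV L \<circ> inv_into UNIV K"
    using transformation_group_inv(1)[OF G] assms(2,3) by (simp add: o_inv_distrib)
  moreover have "L \<circ> g \<circ> inv_into UNIV L \<in> \<Gamma>" if "g \<in> \<Gamma>" for g
    using that assms(3) transformation_group_inv[OF G assms(3)] m_closed by simp
  ultimately show ?thesis
    by (auto simp: Aut_group_def conj_by_def comp_assoc fun_eq_iff)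
qed

lemma Inn_r_coset:
  assumes G: "group (transformation_group \<Gamma>)" and K: "K \<in> \<Gamma>"
  shows "Inn \<Gamma> #>\<^bsub>Aut_group \<Gamma>\<^esub> conj_by K \<Gamma> = Inn \<Gamma>"
proof -
  interpret group "transformation_group \<Gamma>"
    by (fact G)
  have K_inv: "inv_into UNIV K \<in> \<Gamma>" "inv_into UNIV K \<circ> K = id"
    using transformation_group_inv[OF G K] by (simp_all add: bij_is_inj)
  have "conj_by g \<Gamma> \<otimes>\<^bsub>Aut_group \<Gamma>\<^esub> conj_by K \<Gamma> \<in> Inn \<Gamma>" if "g \<in> \<Gamma>" for g
    using that K m_closed by (simp add: conj_by_mult[OF G] Inn_def)
  moreover have "conj_by g \<Gamma> \<in> (\<lambda>h. h \<otimes>\<^bsub>Aut_group \<Gamma>\<^esub> conj_by K \<Gamma>) ` Inn \<Gamma>" if "g \<in> \<Gamma>" for g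
  proof
    show "conj_by g \<Gamma> = conj_by (g \<circ> inv_into UNIV K) \<Gamma> \<otimes>\<^bsub>Aut_group \<Gamma>\<^esub> conj_by K \<Gamma>"
      using that K K_inv m_closed by (simp add: conj_by_mult[OF G] comp_assoc)
    show "conj_by (g \<circ> inv_into UNIV K) \<Gamma> \<in> Inn \<Gamma>"
      using that K_inv m_closed by (simp add: Inn_def)
  qed
  ultimately show ?thesis
    unfolding r_coset_def Inn_def by blast
qed

lemma Out_group_trivial:
  assumes G: "group (transformation_group \<Gamma>)" and Aut: "carrier (Aut_group \<Gamma>) = Inn \<Gamma>"
  shows "carrier (Out_group \<Gamma>) = {Inn \<Gamma>}" "Inn \<Gamma> \<otimes>\<^bsub>Out_group \<Gamma>\<^esub> Inn \<Gamma> = Inn \<Gamma>"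
proof -
  interpret group "transformation_group \<Gamma>"
    by (fact G)
  have "carrier (Out_group \<Gamma>) = (\<Union>K\<in>\<Gamma>. {Inn \<Gamma> #>\<^bsub>Aut_group \<Gamma>\<^esub> conj_by K \<Gamma>})"
    unfolding Out_group_def FactGroup_def RCOSETS_def Aut by (simp add: Inn_def)
  also have "\<dots> = {Inn \<Gamma>}"
    using Inn_r_coset[OF G] one_closed by auto
  finally show "carrier (Out_group \<Gamma>) = {Inn \<Gamma>}" .
  have "Inn \<Gamma> <#>\<^bsub>Aut_group \<Gamma>\<^esub> Inn \<Gamma> = (\<Union>K\<in>\<Gamma>. Inn \<Gamma> #>\<^bsub>Aut_group \<Gamma>\<^esub> conj_by K \<Gamma>)"
    by (auto simp: set_mult_def r_coset_def Inn_def)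
  also have "\<dots> = Inn \<Gamma>"
    using Inn_r_coset[OF G] one_closed by auto
  finally show "Inn \<Gamma> \<otimes>\<^bsub>Out_group \<Gamma>\<^esub> Inn \<Gamma> = Inn \<Gamma>"
    by (simp add: Out_group_def FactGroup_def)
qed

locale p6m_automorphism =
  fixes \<phi> :: "(complex \<Rightarrow> complex) \<Rightarrow> complex \<Rightarrow> complex"
  assumes in_Aut_group: "\<phi> \<in> carrier (Aut_group p6m)"
begin

sublocale group_hom "transformation_group p6m" "transformation_group p6m" \<phi>
  using Aut_group_iso[OF in_Aut_group] group_p6m
  by (simp add: group_hom_def group_hom_axioms_def iso_imp_homomorphism)

lemma inj_on_p6m: "inj_on \<phi> p6m"
  using in_Aut_group unfolding in_Aut_group_iff bij_betw_def by blast

lemma image_translations: "\<phi> ` transl ` hex_lattice = transl ` hex_lattice"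
  using iso_image_commutes_with_conjugates[OF group_p6m group_p6m Aut_group_iso[OF in_Aut_group]]
  by (simp add: commutes_with_conjugates_p6m_eq_translations)

definition transl_part :: "complex \<Rightarrow> complex" where
  "transl_part t = \<phi> (transl t) 0"

lemma transl_image:
  assumes "t \<in> hex_lattice"
  shows "\<phi> (transl t) = transl (transl_part t)" "transl_part t \<in> hex_lattice"
proof -
  have "\<phi> (transl t) \<in> transl ` hex_lattice"
    using assms by (subst image_translations[symmetric]) (intro imageI)
  then obtain u where u: "u \<in> hex_lattice" "\<phi> (transl t) = transl u"
    by blast
  moreover have "transl_part t = u"
    by (simp add: transl_part_def u(2) transl_def)
  ultimately show "\<phi> (transl t) = transl (transl_part t)" "transl_part t \<in> hex_lattice"
    by simp_all
qed

lemma transl_part_add: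
  assumes "x \<in> hex_lattice" "y \<in> hex_lattice"
  shows "transl_part (x + y) = transl_part x + transl_part y"
proof -
  have "transl (transl_part (x + y)) = \<phi> (transl x \<circ> transl y)"
    using assms by (simp add: transl_image hex_lattice_add)
  also have "\<dots> = transl (transl_part x + transl_part y)"
    using hom_mult[of "transl x" "transl y"] assms by (simp add: transl_image)
  finally show ?thesis
    by simp
qed

lemma transl_part_rot6:
  "\<exists>b e. cmod b = 1 \<and> (\<forall>t\<in>hex_lattice. transl_part (omega6 * t) = b * cnj_if e (transl_part t))"
proof -
  obtain p b e where \<phi>_rot6: "\<phi> rot6 = motion p b e" and "b \<in> hex_units"
    using hom_closed[of rot6] by (auto elim: p6mE)
  have "transl_part (omega6 * t) = b * cnj_if e (transl_part t)" if t: "t \<in> hex_lattice" for t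
  proof -
    have "rot6 \<circ> transl t = transl (omega6 * t) \<circ> rot6"
      unfolding rot6_eq_motion motion_comp_transl by simp
    then have "\<phi> rot6 \<circ> transl (transl_part t) = transl (transl_part (omega6 * t)) \<circ> \<phi> rot6"
      using hom_mult[of rot6 "transl t"] hom_mult[of "transl (omega6 * t)" rot6] t
      by (simp add: transl_image hex_lattice_mult)
    then have "(transl (b * cnj_if e (transl_part t)) \<circ> \<phi> rot6) 0
        = (transl (transl_part (omega6 * t)) \<circ> \<phi> rot6) 0"
      unfolding \<phi>_rot6 motion_comp_transl by simp
    then show ?thesis
      by (simp add: transl_def)
  qed
  then show ?thesis
    using \<open>b \<in> hex_units\<close> by (auto dest: hex_unitsD)
qed

lemma transl_part_1_neq_0: "transl_part 1 \<noteq> 0"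
proof
  assume "transl_part 1 = 0"
  then have "\<phi> (transl 1) = \<phi> id"
    using hom_one by (simp add: transl_image)
  then have "transl 1 = transl 0"
    using inj_on_p6m by (simp add: inj_on_eq_iff)
  then show False
    by (simp only: transl_eq_iff) simp
qed

lemma transl_part_eq_1: "\<exists>t\<in>hex_lattice. transl_part t = 1"
proof -
  have "transl 1 \<in> (\<lambda>t. \<phi> (transl t)) ` hex_lattice"
    unfolding image_image[symmetric] image_translations by blast
  then obtain t where "t \<in> hex_lattice" "\<phi> (transl t) = transl 1"
    by (metis imageE)
  then show ?thesis
    using transl_image(1) by (metis transl_eq_iff)
qed

lemma transl_image_semilinear:
  "\<exists>\<alpha> e. \<alpha> \<in> hex_units \<and> (\<forall>t\<in>hex_lattice. \<phi> (transl t) = transl (\<alpha> * cnj_if e t))"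
proof -
  obtain b e where "cmod b = 1"
    and rot: "\<forall>t\<in>hex_lattice. transl_part (omega6 * t) = b * cnj_if e (transl_part t)"
    using transl_part_rot6 by blast
  then obtain e' where semilinear: "\<forall>t\<in>hex_lattice. transl_part t = transl_part 1 * cnj_if e' t"
    using hex_lattice_additive_semilinear[of transl_part b e] transl_part_add transl_part_1_neq_0
    by blast
  obtain t where "t \<in> hex_lattice" "transl_part t = 1"
    using transl_part_eq_1 by blast
  then have "transl_part 1 * cnj_if e' t = 1"
    using semilinear by metis
  then have "cmod (transl_part 1) = 1"
    using transl_image(2)[OF one_in_hex_lattice] \<open>t \<in> hex_lattice\<close>
    by (intro norm_hex_lattice_invertible) auto
  then have "transl_part 1 \<in> hex_units"
    using transl_image(2)[OF one_in_hex_lattice] by blast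
  moreover have "\<forall>t\<in>hex_lattice. \<phi> (transl t) = transl (transl_part 1 * cnj_if e' t)"
    using semilinear transl_image(1) by metis
  ultimately show ?thesis
    by blast
qed

lemma conj_fixes_translations:
  assumes h: "h \<in> p6m"
    and conj_transl: "\<And>t. t \<in> hex_lattice \<Longrightarrow> \<phi> (transl t) \<circ> h = h \<circ> transl t"
  shows "p6m_endomorphism_fixing_translations (\<lambda>g. inv_into UNIV h \<circ> \<phi> g \<circ> h)"
proof
  have h_inv: "h (inv_into UNIV h x) = x" "inv_into UNIV h (h x) = x" for x
    using p6m_bij[OF h] by (simp_all add: bij_is_inj bij_is_surj surj_f_inv_f)
  show "inv_into UNIV h \<circ> \<phi> g \<circ> h \<in> p6m" if "g \<in> p6m" for g
    using that h hom_closed[of g] by (auto intro!: p6m_comp)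
  show "inv_into UNIV h \<circ> \<phi> (g \<circ> k) \<circ> h
      = (inv_into UNIV h \<circ> \<phi> g \<circ> h) \<circ> (inv_into UNIV h \<circ> \<phi> k \<circ> h)" if "g \<in> p6m" "k \<in> p6m" for g k
    using that hom_mult[of g k] h_inv by (simp add: fun_eq_iff)
  show "inv_into UNIV h \<circ> \<phi> (transl t) \<circ> h = transl t" if "t \<in> hex_lattice" for t
    using conj_transl[OF that] h_inv by (simp add: fun_eq_iff comp_assoc)
qed

lemma inner: "\<exists>K\<in>p6m. \<phi> = conj_by K p6m"
proof -
  obtain \<alpha> e where "\<alpha> \<in> hex_units" and \<phi>_transl: "\<forall>t\<in>hex_lattice. \<phi> (transl t) = transl (\<alpha> * cnj_if e t)"
    using transl_image_semilinear by blast
  define h where "h = motion 0 \<alpha> e"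
  have h: "h \<in> p6m"
    unfolding h_def using \<open>\<alpha> \<in> hex_units\<close> by blast
  have h_inv: "h (inv_into UNIV h x) = x" for x
    using p6m_bij[OF h] by (simp add: bij_is_surj surj_f_inv_f)
  interpret \<psi>: p6m_endomorphism_fixing_translations "\<lambda>g. inv_into UNIV h \<circ> \<phi> g \<circ> h"
    using h \<phi>_transl by (intro conj_fixes_translations) (simp_all add: h_def motion_comp_transl)
  obtain v where "v \<in> hex_lattice"
    and v: "\<forall>g\<in>p6m. inv_into UNIV h \<circ> \<phi> g \<circ> h = transl v \<circ> g \<circ> transl (- v)"
    using \<psi>.conj_by_translation by blast
  define K where "K = h \<circ> transl v"
  have K_inv: "inv_into UNIV K = transl (- v) \<circ> inv_into UNIV h"
    unfolding K_def using p6m_bij[OF h] by (simp add: o_inv_distrib bij_transl inv_transl)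
  have "\<phi> g = conj_by K p6m g" for g
  proof (cases "g \<in> p6m")
    case True
    have "\<phi> g = h \<circ> (inv_into UNIV h \<circ> \<phi> g \<circ> h) \<circ> inv_into UNIV h"
      using h_inv by (simp add: fun_eq_iff)
    also have "\<dots> = h \<circ> (transl v \<circ> g \<circ> transl (- v)) \<circ> inv_into UNIV h"
      using True v by simp
    also have "\<dots> = K \<circ> g \<circ> inv_into UNIV K"
      unfolding K_inv by (simp add: K_def comp_assoc)
    finally show ?thesis
      using True by (simp add: conj_by_def)
  next
    case False
    then show ?thesis
      using extensional_arb[OF _ False] in_Aut_group unfolding in_Aut_group_iff conj_by_def by auto
  qed
  moreover have "K \<in> p6m"
    unfolding K_def using h \<open>v \<in> hex_lattice\<close> by blast
  ultimately show ?thesis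
    by blast
qed

end

lemma Aut_group_p6m: "carrier (Aut_group p6m) = Inn p6m"
  using p6m_automorphism.inner inner_conj_by_in_Aut_group[OF group_p6m]
  by (auto simp: Inn_def p6m_automorphism_def)

section \<open>The affine normalizer and the orbit space\<close>

lemma complex_linear_eq_id:
  assumes M: "linear M" and "M 1 = 1" "M w = w" "Im w \<noteq> 0"
  shows "M = id"
proof -
  have w: "w = Re w *\<^sub>R 1 + Im w *\<^sub>R \<i>"
    by (simp add: complex_eq_iff)
  have "Re w *\<^sub>R 1 + Im w *\<^sub>R M \<i> = Re w *\<^sub>R 1 + Im w *\<^sub>R \<i>"
    using \<open>M w = w\<close> \<open>M 1 = 1\<close> w linear_add[OF M] linear_scale[OF M] by metis
  then have "M \<i> = \<i>"
    using \<open>Im w \<noteq> 0\<close> by simp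
  have "M z = z" for z
  proof -
    have z: "Re z *\<^sub>R 1 + Im z *\<^sub>R \<i> = z"
      by (simp add: complex_eq_iff)
    have "M (Re z *\<^sub>R 1 + Im z *\<^sub>R \<i>) = Re z *\<^sub>R 1 + Im z *\<^sub>R \<i>"
      using \<open>M \<i> = \<i>\<close> \<open>M 1 = 1\<close> by (simp add: linear_add[OF M] linear_scale[OF M])
    then show ?thesis
      unfolding z .
  qed
  then show ?thesis
    by auto
qed

lemma affine_centralizing_p6m_eq_id:
  assumes M: "linear M" and comm: "\<And>g. g \<in> p6m \<Longrightarrow> (\<lambda>z. c + M z) \<circ> g = g \<circ> (\<lambda>z. c + M z)"
  shows "(\<lambda>z. c + M z) = id"
proof -
  have M0: "M 0 = 0"
    using linear_0[OF M] .
  have "M t = t" if "t \<in> hex_lattice" for t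
    using fun_cong[OF comm[OF transl_in_p6m[OF that]], of 0] M0 by (simp add: transl_def)
  then have "M 1 = 1" "M omega6 = omega6"
    by simp_all
  have "c = omega6 * c"
    using fun_cong[OF comm[OF rot6_in_p6m], of 0] M0 by (simp add: rot6_def)
  then have "c = 0"
    using omega6_neq_1 by (metis mult_cancel_right2)
  moreover have "M = id"
    using complex_linear_eq_id[OF M \<open>M 1 = 1\<close> \<open>M omega6 = omega6\<close>] by simp
  ultimately show ?thesis
    by (simp add: fun_eq_iff)
qed

lemma linear_mult_cnj_if: "linear L \<Longrightarrow> linear (\<lambda>z. b * cnj_if e (L z))"
  using linear_compose[OF linear_compose[OF _ linear_cnj] bounded_linear.linear[OF bounded_linear_mult_right]]
    linear_compose[OF _ bounded_linear.linear[OF bounded_linear_mult_right]]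
  by (cases e) (auto simp: o_def)

lemma conj_by_eq_imp_centralizes:
  assumes f: "bij f" and K: "bij K" and eq: "conj_by f \<Gamma> = conj_by K \<Gamma>" and g: "g \<in> \<Gamma>"
  shows "(inv_into UNIV K \<circ> f) \<circ> g = g \<circ> (inv_into UNIV K \<circ> f)"
proof -
  have conj: "f \<circ> g \<circ> inv_into UNIV f = K \<circ> g \<circ> inv_into UNIV K"
    using fun_cong[OF eq, of g] g by (simp add: conj_by_def)
  have "f (g z) = K (g (inv_into UNIV K (f z)))" for z
    using fun_cong[OF conj, of "f z"] bij_is_inj[OF f] by simp
  then show ?thesis
    using bij_is_inj[OF K] by (simp add: fun_eq_iff)
qed

lemma normalizer_aff_p6m: "normalizer_aff p6m \<subseteq> p6m"
proof
  fix f
  assume f: "f \<in> normalizer_aff p6m"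
  then obtain a L where L: "linear L" "bij L" and f_eq: "f = (\<lambda>x. a + L x)"
    unfolding normalizer_aff_def affine_maps_def by blast
  have "bij f"
    using bij_comp[OF L(2) bij_transl[of a]] by (simp add: f_eq transl_def o_def)
  then have "conj_by f p6m \<in> carrier (Aut_group p6m)"
    using f p6m_comp by (intro conj_by_in_Aut_group) (auto simp: normalizer_aff_def)
  then obtain K where K: "K \<in> p6m" "conj_by f p6m = conj_by K p6m"
    using p6m_automorphism.inner p6m_automorphism.intro by blast
  obtain s b e where K_inv: "inv_into UNIV K = motion s b e"
    using inv_in_p6m[OF K(1)] by blast
  have "inv_into UNIV K \<circ> f = (\<lambda>z. (s + b * cnj_if e a) + b * cnj_if e (L z))"
    by (simp add: K_inv f_eq motion_def fun_eq_iff algebra_simps)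
  moreover have "(inv_into UNIV K \<circ> f) \<circ> g = g \<circ> (inv_into UNIV K \<circ> f)" if "g \<in> p6m" for g
    using conj_by_eq_imp_centralizes[OF \<open>bij f\<close> p6m_bij[OF K(1)] K(2) that] .
  ultimately have "inv_into UNIV K \<circ> f = id"
    using affine_centralizing_p6m_eq_id[OF linear_mult_cnj_if[OF L(1)]] by metis
  moreover have "f = K \<circ> (inv_into UNIV K \<circ> f)"
    using bij_is_surj[OF p6m_bij[OF K(1)]] by (simp add: fun_eq_iff surj_f_inv_f)
  ultimately show "f \<in> p6m"
    using K(1) by simp
qed

lemma orb_apply:
  assumes G: "group (transformation_group \<Gamma>)" and g: "g \<in> \<Gamma>"
  shows "orb \<Gamma> (g x) = orb \<Gamma> x"
proof -
  interpret group "transformation_group \<Gamma>"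
    by (fact G)
  note g_inv = transformation_group_inv[OF G g]
  have right_mult: "(\<lambda>h. h \<circ> g) ` \<Gamma> = \<Gamma>"
  proof
    show "(\<lambda>h. h \<circ> g) ` \<Gamma> \<subseteq> \<Gamma>"
      using g m_closed by auto
    show "\<Gamma> \<subseteq> (\<lambda>h. h \<circ> g) ` \<Gamma>"
    proof
      fix h
      assume "h \<in> \<Gamma>"
      then have "h \<circ> inv_into UNIV g \<in> \<Gamma>" "h = h \<circ> inv_into UNIV g \<circ> g"
        using g_inv m_closed by (simp_all add: comp_assoc bij_is_inj)
      then show "h \<in> (\<lambda>h. h \<circ> g) ` \<Gamma>"
        by blast
    qed
  qed
  have "orb \<Gamma> (g x) = (\<lambda>h. h x) ` (\<lambda>h. h \<circ> g) ` \<Gamma>"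
    unfolding orb_def image_image by simp
  then show ?thesis
    unfolding right_mult orb_def .
qed

lemma induced_eq_idt:
  assumes G: "group (transformation_group \<Gamma>)" and K: "K \<in> \<Gamma>"
  shows "induced \<Gamma> K = idt \<Gamma>"
proof
  fix S
  show "induced \<Gamma> K S = idt \<Gamma> S"
  proof (cases "S \<in> orbit_space \<Gamma>")
    case True
    then obtain y where S: "S = orb \<Gamma> y"
      unfolding orbit_space_def by blast
    have "id \<in> \<Gamma>"
      using monoid.one_closed[OF group.is_monoid[OF G]] by simp
    then have "y \<in> S"
      unfolding S orb_def by (intro image_eqI[of _ _ id]) auto
    then have "(SOME x. x \<in> S) \<in> S"
      by (rule someI)
    then obtain h where "h \<in> \<Gamma>" "(SOME x. x \<in> S) = h y"
      unfolding S orb_def by blast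
    then have "orb \<Gamma> (K (SOME x. x \<in> S)) = orb \<Gamma> (h y)"
      using orb_apply[OF G K] by simp
    also have "\<dots> = S"
      using orb_apply[OF G \<open>h \<in> \<Gamma>\<close>] S by simp
    finally have "orb \<Gamma> (K (SOME x. x \<in> S)) = S" .
    then show ?thesis
      using True by (simp add: induced_def idt_def)
  next
    case False
    then show ?thesis
      by (simp add: induced_def idt_def)
  qed
qed

lemma id_in_normalizer_aff: "id \<in> normalizer_aff \<Gamma>"
proof -
  have "id \<in> affine_maps"
    unfolding affine_maps_def using linear_id by (intro CollectI exI[of _ 0] exI[of _ id]) auto
  then show ?thesis
    by (simp add: normalizer_aff_def)
qed

lemma Aff_p6m: "Aff p6m = {idt p6m}"
proof -
  have "induced p6m f = idt p6m" if "f \<in> normalizer_aff p6m" for f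
    using that normalizer_aff_p6m by (intro induced_eq_idt[OF group_p6m]) blast
  then show ?thesis
    unfolding Aff_def using id_in_normalizer_aff[of p6m] by (auto intro: rev_image_eqI[of id])
qed

lemma Sym_p6m: "Sym p6m = {idt p6m}"
proof -
  have "Sym p6m \<subseteq> Aff p6m"
    unfolding Sym_def Aff_def by blast
  moreover have "idt p6m \<in> Sym p6m"
    unfolding Sym_def using id_in_normalizer_aff[of p6m] induced_eq_idt[OF group_p6m id_in_p6m]
    by (intro rev_image_eqI[of id]) simp_all
  ultimately show ?thesis
    using Aff_p6m by blast
qed

lemma Omega_p6m_idt: "Omega p6m (idt p6m) = Inn p6m"
proof -
  define f where "f = (SOME f. f \<in> normalizer_aff p6m \<and> induced p6m f = idt p6m)"
  have "\<exists>f. f \<in> normalizer_aff p6m \<and> induced p6m f = idt p6m"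
    using id_in_normalizer_aff induced_eq_idt[OF group_p6m id_in_p6m] by blast
  then have "f \<in> normalizer_aff p6m"
    unfolding f_def by (rule someI_ex[THEN conjunct1])
  then have "f \<in> p6m"
    using normalizer_aff_p6m by blast
  then show ?thesis
    unfolding Omega_def f_def[symmetric] by (rule Inn_r_coset[OF group_p6m])
qed

theorem lemma1:
  shows "Sym p6m = {idt p6m} \<and> Aff p6m = {idt p6m}
         \<and> Omega p6m \<in> iso (Aff_group p6m) (Out_group p6m)"
proof (intro conjI)
  show "Sym p6m = {idt p6m}" "Aff p6m = {idt p6m}"
    by (fact Sym_p6m, fact Aff_p6m)
  have "carrier (Aff_group p6m) = {idt p6m}"
    by (simp add: Aff_group_def Aff_p6m)
  moreover have "idt p6m \<otimes>\<^bsub>Aff_group p6m\<^esub> idt p6m = idt p6m"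
    by (simp add: Aff_group_def idt_def fun_eq_iff)
  moreover note Out_group_trivial[OF group_p6m Aut_group_p6m] Omega_p6m_idt
  ultimately show "Omega p6m \<in> iso (Aff_group p6m) (Out_group p6m)"
    unfolding iso_def hom_def bij_betw_def by auto
qed

end
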